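(* Let $N$ be an nfa with $n$ states accepting the language $L$, and suppose $L$ has exactly $2^n$ distinct left derivatives. Then $\mathrm{LQ}(L)$ is a boolean algebra, and $\mathrm{ns}(L)=\mathrm{nsyn}(L)=n$.
   Context: Left derivatives: $u^{-1}L=\{w:uw\in L\}$. $\mathrm{LQ}(L)$ is the set of finite unions (including $\emptyset$) of left derivatives, ordered by inclusion. An nfa has finitely many states, transition relations, and sets of initial and final states (several initial states allowed). $\mathrm{ns}(L)$ is the least number of states of an nfa accepting $L$; $\mathrm{nsyn}(L)$ is the least number of states of an nfa for $L$ all of whose states accept languages in the boolean algebra generated by the two-sided derivatives $u^{-1}Lv^{-1}=\{w:uwv\in L\}$. *)

theory Defs
  imports Main
begin

record ('s, 'a) nfa =
  states :: "'s set"
  init   :: "'s set"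
  final  :: "'s set"
  delta  :: "('s \<times> 'a \<times> 's) set"

definition wf_nfa :: "('s, 'a) nfa \<Rightarrow> bool" where
  "wf_nfa N \<longleftrightarrow> finite (states N) \<and> init N \<subseteq> states N \<and> final N \<subseteq> states N
     \<and> delta N \<subseteq> states N \<times> UNIV \<times> states N"

fun steps :: "('s, 'a) nfa \<Rightarrow> 's set \<Rightarrow> 'a list \<Rightarrow> 's set" where
  "steps N S [] = S"
| "steps N S (a # w) = steps N {q'. \<exists>q\<in>S. (q, a, q') \<in> delta N} w"

definition lang :: "('s, 'a) nfa \<Rightarrow> 'a list set" where
  "lang N = {w. steps N (init N) w \<inter> final N \<noteq> {}}"

definition state_lang :: "('s, 'a) nfa \<Rightarrow> 's \<Rightarrow> 'a list set" where
  "state_lang N q = {w. steps N {q} w \<inter> final N \<noteq> {}}"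

definition lderiv :: "'a list \<Rightarrow> 'a list set \<Rightarrow> 'a list set" where
  "lderiv u L = {w. u @ w \<in> L}"

definition left_derivs :: "'a list set \<Rightarrow> 'a list set set" where
  "left_derivs L = {lderiv u L | u. True}"

definition two_sided_derivs :: "'a list set \<Rightarrow> 'a list set set" where
  "two_sided_derivs L = {{w. u @ w @ v \<in> L} | u v. True}"

definition LQ :: "'a list set \<Rightarrow> 'a list set set" where
  "LQ L = {\<Union> F | F. finite F \<and> F \<subseteq> left_derivs L}"

inductive_set bool_gen :: "'b set set \<Rightarrow> 'b set set" for G where
  gen: "X \<in> G \<Longrightarrow> X \<in> bool_gen G"
| compl: "X \<in> bool_gen G \<Longrightarrow> - X \<in> bool_gen G"
| union: "X \<in> bool_gen G \<Longrightarrow> Y \<in> bool_gen G \<Longrightarrow> X \<union> Y \<in> bool_gen G"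

definition is_sup :: "'b set set \<Rightarrow> 'b set \<Rightarrow> 'b set \<Rightarrow> 'b set \<Rightarrow> bool" where
  "is_sup S x y z \<longleftrightarrow> z \<in> S \<and> x \<subseteq> z \<and> y \<subseteq> z \<and> (\<forall>w\<in>S. x \<subseteq> w \<and> y \<subseteq> w \<longrightarrow> z \<subseteq> w)"

definition is_inf :: "'b set set \<Rightarrow> 'b set \<Rightarrow> 'b set \<Rightarrow> 'b set \<Rightarrow> bool" where
  "is_inf S x y z \<longleftrightarrow> z \<in> S \<and> z \<subseteq> x \<and> z \<subseteq> y \<and> (\<forall>w\<in>S. w \<subseteq> x \<and> w \<subseteq> y \<longrightarrow> w \<subseteq> z)"

definition boolean_poset :: "'b set set \<Rightarrow> bool" where
  "boolean_poset S \<longleftrightarrow>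
     (\<forall>x\<in>S. \<forall>y\<in>S. (\<exists>z. is_sup S x y z) \<and> (\<exists>z. is_inf S x y z))
   \<and> (\<forall>x\<in>S. \<forall>y\<in>S. \<forall>z\<in>S. \<forall>yz d xy xz.
        is_sup S y z yz \<longrightarrow> is_inf S x yz d \<longrightarrow> is_inf S x y xy \<longrightarrow> is_inf S x z xz
        \<longrightarrow> is_sup S xy xz d)
   \<and> (\<exists>b\<in>S. \<exists>t\<in>S. (\<forall>x\<in>S. b \<subseteq> x \<and> x \<subseteq> t)
        \<and> (\<forall>x\<in>S. \<exists>c\<in>S. is_sup S x c t \<and> is_inf S x c b))"

text \<open>State sets are taken to be sets of naturals w.l.o.g.\<close>
definition ns :: "'a list set \<Rightarrow> nat" where
  "ns L = (LEAST k. \<exists>M :: (nat, 'a) nfa. wf_nfa M \<and> card (states M) = k \<and> lang M = L)"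

definition nsyn :: "'a list set \<Rightarrow> nat" where
  "nsyn L = (LEAST k. \<exists>M :: (nat, 'a) nfa. wf_nfa M \<and> card (states M) = k \<and> lang M = L
      \<and> (\<forall>q\<in>states M. state_lang M q \<in> bool_gen (two_sided_derivs L)))"

end

(*
  By the subset construction, the left derivative of L by u is the union of the state
  languages of the set of states that u reaches, so L has at most 2^n left derivatives.
  Having exactly 2^n of them forces every set of states to be reachable and the map
  S \<mapsto> \<Union>{L_q | q \<in> S} to be injective on subsets. As this map preserves unions, it is then
  an order embedding of the powerset of the states onto LQ(L), which is therefore a
  boolean algebra. Every state language is a left derivative (reach the singleton), and
  an nfa with k states for L gives 2^n \<le> 2^k, so no nfa for L has fewer than n states.
*)

theory Submission
  imports Defs
begin

lemma steps_append: "steps N S (u @ w) = steps N (steps N S u) w"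
  by (induction u arbitrary: S) auto

lemma steps_subset_states:
  assumes "wf_nfa N"
  shows "S \<subseteq> states N \<Longrightarrow> steps N S w \<subseteq> states N"
proof (induction w arbitrary: S)
  case (Cons a w)
  have "{q'. \<exists>q\<in>S. (q, a, q') \<in> delta N} \<subseteq> states N"
    using assms by (auto simp: wf_nfa_def)
  then show ?case by (simp add: Cons.IH)
qed simp

lemma steps_eq_UN_singleton: "steps N S w = (\<Union>q\<in>S. steps N {q} w)"
proof (induction w arbitrary: S)
  case (Cons a w)
  have step: "steps N {q} (a # w) = (\<Union>q'\<in>{q'. (q, a, q') \<in> delta N}. steps N {q'} w)" for q
    using Cons.IH[of "{q'. (q, a, q') \<in> delta N}"] by simp
  have "steps N S (a # w) = (\<Union>q'\<in>{q'. \<exists>q\<in>S. (q, a, q') \<in> delta N}. steps N {q'} w)"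
    using Cons.IH[of "{q'. \<exists>q\<in>S. (q, a, q') \<in> delta N}"] by (simp only: steps.simps)
  also have "\<dots> = (\<Union>q\<in>S. steps N {q} (a # w))"
    unfolding step by blast
  finally show ?case .
qed simp

definition set_lang :: "('s, 'a) nfa \<Rightarrow> 's set \<Rightarrow> 'a list set" where
  "set_lang N S = (\<Union>q\<in>S. state_lang N q)"

lemma set_lang_Un: "set_lang N (X \<union> Y) = set_lang N X \<union> set_lang N Y"
  by (simp add: set_lang_def)

lemma set_lang_Union: "set_lang N (\<Union>G) = \<Union>(set_lang N ` G)"
  by (auto simp: set_lang_def)

lemma lderiv_lang: "lderiv u (lang N) = set_lang N (steps N (init N) u)"
proof -
  have "steps N (init N) (u @ w) = (\<Union>q\<in>steps N (init N) u. steps N {q} w)" for w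
    by (simp only: steps_append steps_eq_UN_singleton[of N "steps N (init N) u"])
  then show ?thesis by (auto simp: lderiv_def lang_def set_lang_def state_lang_def)
qed

definition reachable :: "('s, 'a) nfa \<Rightarrow> 's set set" where
  "reachable N = range (steps N (init N))"

lemma left_derivs_lang: "left_derivs (lang N) = set_lang N ` reachable N"
  by (auto simp: left_derivs_def reachable_def lderiv_lang)

lemma reachable_subset_Pow:
  assumes "wf_nfa N" shows "reachable N \<subseteq> Pow (states N)"
proof -
  have "init N \<subseteq> states N" using assms by (simp add: wf_nfa_def)
  then show ?thesis using steps_subset_states[OF assms] by (auto simp: reachable_def)
qed

lemma card_left_derivs_le:
  assumes "wf_nfa N"
  shows "card (left_derivs (lang N)) \<le> 2 ^ card (states N)"
proof -
  have fin: "finite (Pow (states N))" using assms by (simp add: wf_nfa_def)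
  have "card (left_derivs (lang N)) \<le> card (reachable N)"
    unfolding left_derivs_lang
    by (rule card_image_le[OF finite_subset[OF reachable_subset_Pow[OF assms] fin]])
  also have "\<dots> \<le> card (Pow (states N))" by (rule card_mono[OF fin reachable_subset_Pow[OF assms]])
  also have "\<dots> = 2 ^ card (states N)" using assms by (simp add: wf_nfa_def card_Pow)
  finally show ?thesis .
qed

lemma maximal_left_derivs:
  assumes "wf_nfa N" and "card (left_derivs (lang N)) = 2 ^ card (states N)"
  shows "reachable N = Pow (states N)" and "inj_on (set_lang N) (Pow (states N))"
proof -
  have fin: "finite (Pow (states N))" using assms(1) by (simp add: wf_nfa_def)
  have sub: "reachable N \<subseteq> Pow (states N)" by (rule reachable_subset_Pow[OF assms(1)])
  have "card (set_lang N ` reachable N) \<le> card (reachable N)"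
    by (rule card_image_le[OF finite_subset[OF sub fin]])
  moreover have "card (reachable N) \<le> card (Pow (states N))" by (rule card_mono[OF fin sub])
  ultimately have card_reach: "card (reachable N) = card (Pow (states N))"
    and card_image: "card (set_lang N ` reachable N) = card (reachable N)"
    using assms by (simp_all add: left_derivs_lang wf_nfa_def card_Pow)
  show reach: "reachable N = Pow (states N)"
    by (rule card_subset_eq[OF fin sub card_reach])
  show "inj_on (set_lang N) (Pow (states N))"
    using eq_card_imp_inj_on[OF finite_subset[OF sub fin] card_image] reach by simp
qed

lemma LQ_lang_eq_image_Pow:
  assumes "reachable N = Pow (states N)"
  shows "LQ (lang N) = set_lang N ` Pow (states N)"
proof
  show "LQ (lang N) \<subseteq> set_lang N ` Pow (states N)"
  proof
    fix x assume "x \<in> LQ (lang N)"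
    then obtain G where G: "G \<subseteq> Pow (states N)" and x: "x = \<Union>(set_lang N ` G)"
      by (auto simp: LQ_def left_derivs_lang assms subset_image_iff)
    have "\<Union>G \<in> Pow (states N)" using G by blast
    then show "x \<in> set_lang N ` Pow (states N)" unfolding x set_lang_Union[symmetric] by blast
  qed
  show "set_lang N ` Pow (states N) \<subseteq> LQ (lang N)"
  proof
    fix x assume "x \<in> set_lang N ` Pow (states N)"
    then have "x = \<Union>{x}" and "finite {x} \<and> {x} \<subseteq> left_derivs (lang N)"
      by (simp_all add: left_derivs_lang assms)
    then show "x \<in> LQ (lang N)" unfolding LQ_def by blast
  qed
qed

lemma state_lang_in_left_derivs:
  assumes "reachable N = Pow (states N)" and "q \<in> states N"
  shows "state_lang N q \<in> left_derivs (lang N)"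
proof -
  have "state_lang N q = set_lang N {q}" by (simp add: set_lang_def)
  then show ?thesis using assms by (simp add: left_derivs_lang)
qed

lemma left_derivs_subset_two_sided_derivs: "left_derivs L \<subseteq> two_sided_derivs L"
proof
  fix X assume "X \<in> left_derivs L"
  then obtain u where "X = {w. u @ w @ [] \<in> L}" by (auto simp: left_derivs_def lderiv_def)
  then show "X \<in> two_sided_derivs L" unfolding two_sided_derivs_def by blast
qed

lemma subset_iff_if_inj_on_Pow_Un_hom:
  assumes hom: "\<And>X Y. f (X \<union> Y) = f X \<union> f Y" and inj: "inj_on f (Pow A)"
    and "X \<subseteq> A" and "Y \<subseteq> A"
  shows "f X \<subseteq> f Y \<longleftrightarrow> X \<subseteq> Y"
proof
  assume "f X \<subseteq> f Y"
  then have "f (X \<union> Y) = f Y" by (simp add: hom Un_absorb1)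
  then have "X \<union> Y = Y" using inj_onD[OF inj] assms(3,4) by blast
  then show "X \<subseteq> Y" by blast
next
  assume "X \<subseteq> Y"
  then have "f Y = f X \<union> f Y" by (metis hom sup.absorb2)
  then show "f X \<subseteq> f Y" by blast
qed

lemma is_sup_unique: "is_sup S x y z \<Longrightarrow> is_sup S x y z' \<Longrightarrow> z = z'"
  unfolding is_sup_def by (simp add: subset_antisym)

lemma is_inf_unique: "is_inf S x y z \<Longrightarrow> is_inf S x y z' \<Longrightarrow> z = z'"
  unfolding is_inf_def by (simp add: subset_antisym)

lemma is_sup_image_Pow:
  assumes emb: "\<And>X Y. X \<subseteq> A \<Longrightarrow> Y \<subseteq> A \<Longrightarrow> f X \<subseteq> f Y \<longleftrightarrow> X \<subseteq> Y"
    and "X \<subseteq> A" and "Y \<subseteq> A"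
  shows "is_sup (f ` Pow A) (f X) (f Y) (f (X \<union> Y))"
  using assms(2,3) unfolding is_sup_def by (simp add: emb)

lemma is_inf_image_Pow:
  assumes emb: "\<And>X Y. X \<subseteq> A \<Longrightarrow> Y \<subseteq> A \<Longrightarrow> f X \<subseteq> f Y \<longleftrightarrow> X \<subseteq> Y"
    and "X \<subseteq> A" and "Y \<subseteq> A"
  shows "is_inf (f ` Pow A) (f X) (f Y) (f (X \<inter> Y))"
  using assms(2,3) unfolding is_inf_def by (simp add: emb le_infI1)

lemma boolean_poset_image_Pow:
  assumes emb: "\<And>X Y. X \<subseteq> A \<Longrightarrow> Y \<subseteq> A \<Longrightarrow> f X \<subseteq> f Y \<longleftrightarrow> X \<subseteq> Y"
  shows "boolean_poset (f ` Pow A)"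
proof -
  let ?S = "f ` Pow A"
  have sup: "is_sup ?S (f X) (f Y) z \<longleftrightarrow> z = f (X \<union> Y)" if "X \<subseteq> A" "Y \<subseteq> A" for X Y z
    using is_sup_unique[OF _ is_sup_image_Pow[OF emb that]] is_sup_image_Pow[OF emb that] by blast
  have inf: "is_inf ?S (f X) (f Y) z \<longleftrightarrow> z = f (X \<inter> Y)" if "X \<subseteq> A" "Y \<subseteq> A" for X Y z
    using is_inf_unique[OF _ is_inf_image_Pow[OF emb that]] is_inf_image_Pow[OF emb that] by blast
  have lattice: "(\<exists>z. is_sup ?S x y z) \<and> (\<exists>z. is_inf ?S x y z)"
    if xy_mem: "x \<in> ?S" "y \<in> ?S" for x y
  proof -
    obtain X Y where "X \<subseteq> A" "Y \<subseteq> A" and xy: "x = f X" "y = f Y"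
      using xy_mem by blast
    then have "is_sup ?S x y (f (X \<union> Y))" "is_inf ?S x y (f (X \<inter> Y))"
      unfolding xy by (simp_all add: is_sup_image_Pow[OF emb] is_inf_image_Pow[OF emb])
    then show ?thesis by blast
  qed
  have distrib: "is_sup ?S xy xz d"
    if xyz_mem: "x \<in> ?S" "y \<in> ?S" "z \<in> ?S"
      and hyps: "is_sup ?S y z yz" "is_inf ?S x yz d" "is_inf ?S x y xy" "is_inf ?S x z xz"
    for x y z yz d xy xz
  proof -
    obtain X Y Z where XYZ: "X \<subseteq> A" "Y \<subseteq> A" "Z \<subseteq> A" and "x = f X" "y = f Y" "z = f Z"
      using xyz_mem by blast
    with hyps(1) have "yz = f (Y \<union> Z)" by (simp add: sup)
    with hyps(2-4) XYZ \<open>x = f X\<close> \<open>y = f Y\<close> \<open>z = f Z\<close>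
    have "d = f (X \<inter> Y \<union> X \<inter> Z)" "xy = f (X \<inter> Y)" "xz = f (X \<inter> Z)"
      by (simp_all add: inf Int_Un_distrib)
    then show ?thesis using sup XYZ by (simp add: le_infI1)
  qed
  have complement: "is_sup ?S (f X) (f (A - X)) (f A) \<and> is_inf ?S (f X) (f (A - X)) (f {})"
    if "X \<subseteq> A" for X
  proof -
    have "X \<union> (A - X) = A" "X \<inter> (A - X) = {}" using that by blast+
    then show ?thesis using sup[OF that] inf[OF that] by (metis Diff_subset)
  qed
  have bounds: "f {} \<subseteq> x \<and> x \<subseteq> f A" if "x \<in> ?S" for x
    using that emb by blast
  have complemented: "\<exists>c\<in>?S. is_sup ?S x c (f A) \<and> is_inf ?S x c (f {})" if x_mem: "x \<in> ?S" for x
  proof -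
    obtain X where "X \<subseteq> A" "x = f X" using x_mem by blast
    then show ?thesis using complement by blast
  qed
  have "\<forall>x\<in>?S. \<forall>y\<in>?S. (\<exists>z. is_sup ?S x y z) \<and> (\<exists>z. is_inf ?S x y z)"
    using lattice by blast
  moreover have "\<forall>x\<in>?S. \<forall>y\<in>?S. \<forall>z\<in>?S. \<forall>yz d xy xz. is_sup ?S y z yz \<longrightarrow> is_inf ?S x yz d
      \<longrightarrow> is_inf ?S x y xy \<longrightarrow> is_inf ?S x z xz \<longrightarrow> is_sup ?S xy xz d"
    using distrib by blast
  moreover have "\<exists>b\<in>?S. \<exists>t\<in>?S. (\<forall>x\<in>?S. b \<subseteq> x \<and> x \<subseteq> t)
      \<and> (\<forall>x\<in>?S. \<exists>c\<in>?S. is_sup ?S x c t \<and> is_inf ?S x c b)"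
  proof (rule bexI[of _ "f {}"], rule bexI[of _ "f A"])
    show "(\<forall>x\<in>?S. f {} \<subseteq> x \<and> x \<subseteq> f A)
      \<and> (\<forall>x\<in>?S. \<exists>c\<in>?S. is_sup ?S x c (f A) \<and> is_inf ?S x c (f {}))"
      using bounds complemented by blast
  qed blast+
  ultimately show ?thesis
    unfolding boolean_poset_def by (intro conjI)
qed

text \<open>ns and nsyn only range over nfas with natural-number states.\<close>

definition rename :: "('s \<Rightarrow> 't) \<Rightarrow> ('s, 'a) nfa \<Rightarrow> ('t, 'a) nfa" where
  "rename h N = \<lparr>states = h ` states N, init = h ` init N, final = h ` final N,
     delta = {(h p, a, h q) | p a q. (p, a, q) \<in> delta N}\<rparr>"

lemma states_rename: "states (rename h N) = h ` states N"
  by (simp add: rename_def)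

lemma wf_nfa_rename: "wf_nfa N \<Longrightarrow> wf_nfa (rename h N)"
  by (auto simp: wf_nfa_def rename_def)

lemma steps_rename:
  assumes "wf_nfa N" and inj: "inj_on h (states N)"
  shows "S \<subseteq> states N \<Longrightarrow> steps (rename h N) (h ` S) w = h ` steps N S w"
proof (induction w arbitrary: S)
  case (Cons a w)
  let ?succ = "{q'. \<exists>q\<in>S. (q, a, q') \<in> delta N}"
  have delta: "delta N \<subseteq> states N \<times> UNIV \<times> states N" using assms(1) by (simp add: wf_nfa_def)
  have "{q'. \<exists>q\<in>h ` S. (q, a, q') \<in> delta (rename h N)} = h ` ?succ"
    using Cons.prems delta inj_onD[OF inj] by (fastforce simp: rename_def)
  moreover have "?succ \<subseteq> states N" using delta by blast
  ultimately show ?case by (simp add: Cons.IH)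
qed simp

lemma steps_rename_meets_final:
  assumes "wf_nfa N" and inj: "inj_on h (states N)" and "S \<subseteq> states N"
  shows "steps (rename h N) (h ` S) w \<inter> final (rename h N) \<noteq> {}
     \<longleftrightarrow> steps N S w \<inter> final N \<noteq> {}"
proof -
  have "final N \<subseteq> states N" using assms(1) by (simp add: wf_nfa_def)
  then have "h ` steps N S w \<inter> h ` final N = h ` (steps N S w \<inter> final N)"
    using inj_on_image_Int[OF inj steps_subset_states[OF assms(1,3)]] by blast
  moreover have "final (rename h N) = h ` final N" by (simp add: rename_def)
  ultimately show ?thesis by (simp add: steps_rename[OF assms])
qed

lemma lang_rename:
  "wf_nfa N \<Longrightarrow> inj_on h (states N) \<Longrightarrow> lang (rename h N) = lang N"
  using steps_rename_meets_final[of N h "init N"]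
  by (simp add: lang_def wf_nfa_def rename_def)

lemma state_lang_rename:
  "wf_nfa N \<Longrightarrow> inj_on h (states N) \<Longrightarrow> q \<in> states N
   \<Longrightarrow> state_lang (rename h N) (h q) = state_lang N q"
  using steps_rename_meets_final[of N h "{q}"] by (simp add: state_lang_def)

theorem mainTheorem19:
  fixes N :: "('s, 'a::finite) nfa" and L :: "'a list set" and n :: nat
  assumes "wf_nfa N"
    and "card (states N) = n"
    and "lang N = L"
    and "card (left_derivs L) = 2 ^ n"
  shows "boolean_poset (LQ L) \<and> ns L = n \<and> nsyn L = n"
proof -
  have maximal: "card (left_derivs (lang N)) = 2 ^ card (states N)" using assms by simp
  note reach = maximal_left_derivs(1)[OF assms(1) maximal]
  note inj = maximal_left_derivs(2)[OF assms(1) maximal]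
  have "boolean_poset (LQ L)"
    using boolean_poset_image_Pow[OF subset_iff_if_inj_on_Pow_Un_hom[OF set_lang_Un inj]]
    by (simp add: LQ_lang_eq_image_Pow[OF reach] assms(3)[symmetric])
  moreover
  obtain h :: "'s \<Rightarrow> nat" where h: "inj_on h (states N)"
    using assms(1) finite_imp_inj_to_nat_seg by (metis wf_nfa_def)
  let ?M = "rename h N"
  have M: "wf_nfa ?M" "card (states ?M) = n" "lang ?M = L"
    using assms h by (simp_all add: wf_nfa_rename lang_rename states_rename card_image)
  have "state_lang ?M q \<in> bool_gen (two_sided_derivs L)" if q: "q \<in> states ?M" for q
  proof -
    obtain p where "p \<in> states N" "q = h p" using q by (auto simp: states_rename)
    then have "state_lang ?M q \<in> left_derivs L"
      using state_lang_in_left_derivs[OF reach] state_lang_rename[OF assms(1) h] assms(3) by simp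
    then show ?thesis using left_derivs_subset_two_sided_derivs bool_gen.gen by blast
  qed
  moreover have "n \<le> card (states M')" if "wf_nfa M'" and "lang M' = L" for M' :: "(nat, 'a) nfa"
    using card_left_derivs_le[OF that(1)] that(2) assms(4) by simp
  ultimately show ?thesis
    unfolding ns_def nsyn_def using M by (intro conjI Least_equality; blast)
qed

end
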